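(* Let $m\ge2$ and $a,b\in(0,1/m)$. Then $\Sigma_{HC}$ is the natural extension of $\Sigma^+_{HC}$, i.e. $$\Sigma_{HC}=\{\omega\in\{1,\ldots,2m\}^{\mathbb Z}: (\omega_{n-k})_{n\in\mathbb Z^+}\in\Sigma_{HC}^+\text{ for every } k\ge1\}.$$
   Context: $F_a(x)=\frac{x-(i-1)a}{a}$ on $[(i-1)a,ia)$, $i\in\{1,\ldots,m\}$, $F_a(x)=\frac{x-ma}{1-ma}$ on $[ma,1]$. $\Omega_i^+=[(i-1)a,ia)\times[0,1]$ for $i\le m$; $\Omega_i^+=[ma,1]\times[\frac{i-m-1}{m},\frac{i-m}{m})$ for $m+1\le i\le2m-1$; $\Omega_{2m}^+=[ma,1]\times[\frac{m-1}{m},1]$. $f_a(x,y)=(F_a(x),\frac{y}{m}+\frac{i-1}{m})$ on $\Omega_i^+$ for $i\le m$, $f_a(x,y)=(F_a(x),my-i+m+1)$ on $\Omega_i^+$ for $i\ge m+1$. $\Omega_i=\Omega_i^+\times[0,1]$, $f_{a,b}(x,y,z)=(f_a(x,y),(1-mb)z)$ on $\Omega_i$ for $i\le m$, $f_{a,b}(x,y,z)=(f_a(x,y),bz+1-mb+b(i-m-1))$ on $\Omega_i$ for $i\ge m+1$ (a bijection of $[0,1]^3$). $X_a=\bigcap_{n\ge0}f_a^{-n}(\bigcup_i\mathrm{int}\,\Omega_i^+)$, $X_{a,b}=\bigcap_{n\in\mathbb Z}f_{a,b}^{-n}(\bigcup_i\mathrm{int}\,\Omega_i)$; $\pi_a(p)=(\omega_n)_{n\ge0}$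 with $f_a^n(p)\in\mathrm{int}\,\Omega^+_{\omega_n}$, $\pi_{a,b}(p)=(\omega_n)_{n\in\mathbb Z}$ with $f_{a,b}^n(p)\in\mathrm{int}\,\Omega_{\omega_n}$. $\Sigma_{HC}^+=\mathrm{cl}(\pi_a(X_a))$, $\Sigma_{HC}=\mathrm{cl}(\pi_{a,b}(X_{a,b}))$ (closures in product topologies). *)

theory Defs
  imports "HOL-Analysis.Analysis"
begin

definition OmegaP :: "nat \<Rightarrow> real \<Rightarrow> nat \<Rightarrow> (real \<times> real) set" where
  "OmegaP m a i =
    (if 1 \<le> i \<and> i \<le> m then {(real i - 1) * a ..< real i * a} \<times> {0..1}
     else if m + 1 \<le> i \<and> i \<le> 2*m - 1 then
       {real m * a .. 1} \<times> {(real i - real m - 1) / real m ..< (real i - real m) / real m}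
     else if i = 2*m then {real m * a .. 1} \<times> {(real m - 1) / real m .. 1}
     else {})"

definition Fa :: "nat \<Rightarrow> real \<Rightarrow> real \<Rightarrow> real" where
  "Fa m a x =
    (if x < real m * a then (x - real (nat \<lfloor>x / a\<rfloor>) * a) / a
     else (x - real m * a) / (1 - real m * a))"

text \<open>The index of the region containing p (meaningful on the unit square).\<close>
definition idxP :: "nat \<Rightarrow> real \<Rightarrow> real \<times> real \<Rightarrow> nat" where
  "idxP m a p = (SOME i. i \<in> {1..2*m} \<and> p \<in> OmegaP m a i)"

definition fa :: "nat \<Rightarrow> real \<Rightarrow> real \<times> real \<Rightarrow> real \<times> real" where
  "fa m a p = (let (x, y) = p; i = idxP m a p in
     if i \<le> m then (Fa m a x, y / real m + (real i - 1) / real m)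
     else (Fa m a x, real m * y - real i + real m + 1))"

definition OmegaF :: "nat \<Rightarrow> real \<Rightarrow> nat \<Rightarrow> (real \<times> real \<times> real) set" where
  "OmegaF m a i = {(x, y, z). (x, y) \<in> OmegaP m a i \<and> z \<in> {0..1}}"

definition fab :: "nat \<Rightarrow> real \<Rightarrow> real \<Rightarrow> real \<times> real \<times> real \<Rightarrow> real \<times> real \<times> real" where
  "fab m a b p = (let (x, y, z) = p; i = idxP m a (x, y); (x', y') = fa m a (x, y) in
     if i \<le> m then (x', y', (1 - real m * b) * z)
     else (x', y', b * z + 1 - real m * b + b * (real i - real m - 1)))"

definition Xa :: "nat \<Rightarrow> real \<Rightarrow> (real \<times> real) set" where
  "Xa m a = (\<Inter>n. (fa m a ^^ n) -` (\<Union>i\<in>{1..2*m}. interior (OmegaP m a i)))"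

definition good_orbit :: "nat \<Rightarrow> real \<Rightarrow> real \<Rightarrow> (int \<Rightarrow> real \<times> real \<times> real) \<Rightarrow> bool" where
  "good_orbit m a b q \<longleftrightarrow> (\<forall>n. fab m a b (q n) = q (n + 1)) \<and>
      (\<forall>n. q n \<in> (\<Union>i\<in>{1..2*m}. interior (OmegaF m a i)))"

definition Xab :: "nat \<Rightarrow> real \<Rightarrow> real \<Rightarrow> (real \<times> real \<times> real) set" where
  "Xab m a b = {p. \<exists>q. q 0 = p \<and> good_orbit m a b q}"

definition pia :: "nat \<Rightarrow> real \<Rightarrow> real \<times> real \<Rightarrow> nat \<Rightarrow> nat" where
  "pia m a p = (\<lambda>n. THE i. i \<in> {1..2*m} \<and> (fa m a ^^ n) p \<in> interior (OmegaP m a i))"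

definition piab :: "nat \<Rightarrow> real \<Rightarrow> real \<Rightarrow> real \<times> real \<times> real \<Rightarrow> int \<Rightarrow> nat" where
  "piab m a b p = (let q = (SOME q. q 0 = p \<and> good_orbit m a b q) in
     (\<lambda>n. THE i. i \<in> {1..2*m} \<and> q n \<in> interior (OmegaF m a i)))"

definition SigmaHCplus :: "nat \<Rightarrow> real \<Rightarrow> (nat \<Rightarrow> nat) set" where
  "SigmaHCplus m a = closure (pia m a ` Xa m a)"

definition SigmaHC :: "nat \<Rightarrow> real \<Rightarrow> real \<Rightarrow> (int \<Rightarrow> nat) set" where
  "SigmaHC m a b = closure (piab m a b ` Xab m a b)"

end

theory Submission
  imports Defs
begin

(* Two facts tie the itineraries of f_{a,b} to those of f_a: f_{a,b} is injective on the union
   of the interiors of the cells Omega_i, so a point of X_{a,b} has a unique bi-infinite orbit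
   there; and its first two coordinates evolve under f_a. Hence every past-shifted ray of an
   itinerary of f_{a,b} is an itinerary of f_a, and as the natural extension of a closed set is
   closed, Sigma_HC lies in it. Conversely every u in X_a lifts to a full orbit of f_{a,b}: forward
   from (u, z_fix), and backward along the inverse branch of Omega_{m+1} in the plane z = z_fix,
   where z_fix is the fixed point of the vertical map z -> b z + 1 - m b of Omega_{m+1}. As the
   alphabet is discrete, a sequence lies in a closure iff each of its finite windows is matched by
   an element, and a finite window of a sequence of the natural extension is a window of one of
   its past-shifted rays. *)

section \<open>Sequence spaces over a discrete alphabet\<close>

lemma interior_reassoc_Times:
  fixes S :: "('a::euclidean_space \<times> 'b::euclidean_space) set" and T :: "'c::euclidean_space set"
  shows "interior {(x, y, z). (x, y) \<in> S \<and> z \<in> T} =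
    {(x, y, z). (x, y) \<in> interior S \<and> z \<in> interior T}"
proof -
  define f :: "('a \<times> 'b) \<times> 'c \<Rightarrow> 'a \<times> 'b \<times> 'c" where "f = (\<lambda>((x, y), z). (x, y, z))"
  have lin: "linear f" unfolding f_def by (auto simp: linear_iff algebra_simps)
  have bij: "bij f" unfolding f_def by (auto intro!: bijI injI simp: image_def)
  have img: "{(x, y, z). (x, y) \<in> A \<and> z \<in> B} = f ` (A \<times> B)" for A B
    unfolding f_def by force
  show ?thesis
    unfolding img interior_bijective_linear_image[OF lin bij] interior_Times ..
qed

lemma tendsto_fun_iff_pointwise:
  fixes f :: "'c \<Rightarrow> 'a \<Rightarrow> 'b::topological_space"
  shows "(f \<longlongrightarrow> l) F \<longleftrightarrow> (\<forall>i. ((\<lambda>c. f c i) \<longlongrightarrow> l i) F)"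
proof -
  have "(f \<longlongrightarrow> l) F \<longleftrightarrow> limitin (product_topology (\<lambda>i. euclidean) UNIV) f l F"
    by (simp add: euclidean_product_topology)
  also have "\<dots> \<longleftrightarrow> (\<forall>i. limitin euclidean (\<lambda>c. f c i) (l i) F)"
    by (simp add: limitin_componentwise)
  finally show ?thesis by simp
qed

lemma mem_closure_fun_discrete_iff:
  fixes S :: "('a::countable \<Rightarrow> 'b::{discrete_topology, first_countable_topology}) set"
  shows "\<omega> \<in> closure S \<longleftrightarrow> (\<forall>F. finite F \<longrightarrow> (\<exists>s\<in>S. \<forall>i\<in>F. s i = \<omega> i))"
proof
  assume "\<omega> \<in> closure S"
  then obtain s where s: "\<And>j. s j \<in> S" and "s \<longlonglongrightarrow> \<omega>"
    unfolding closure_sequential by blast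
  then have eventually_agree: "\<forall>i. eventually (\<lambda>j. s j i = \<omega> i) sequentially"
    unfolding tendsto_fun_iff_pointwise tendsto_discrete by blast
  show "\<forall>F. finite F \<longrightarrow> (\<exists>s\<in>S. \<forall>i\<in>F. s i = \<omega> i)"
  proof (intro allI impI)
    fix F :: "'a set"
    assume "finite F"
    then have "eventually (\<lambda>j. \<forall>i\<in>F. s j i = \<omega> i) sequentially"
      using eventually_agree by (simp add: eventually_ball_finite)
    then obtain j where "\<forall>i\<in>F. s j i = \<omega> i"
      unfolding eventually_sequentially by blast
    then show "\<exists>s\<in>S. \<forall>i\<in>F. s i = \<omega> i"
      using s by blast
  qed
next
  assume agree: "\<forall>F. finite F \<longrightarrow> (\<exists>s\<in>S. \<forall>i\<in>F. s i = \<omega> i)"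
  have "\<exists>s\<in>S. \<forall>i. to_nat i \<le> N \<longrightarrow> s i = \<omega> i" for N
  proof -
    have "finite (to_nat -` {..N} :: 'a set)"
      by (rule finite_vimageI) auto
    then obtain s where "s \<in> S" "\<forall>i \<in> to_nat -` {..N}. s i = \<omega> i"
      using agree by blast
    then show ?thesis
      by auto
  qed
  then obtain s where s: "\<And>N. s N \<in> S" "\<And>N i. to_nat i \<le> N \<Longrightarrow> s N i = \<omega> i"
    by metis
  have "s \<longlonglongrightarrow> \<omega>"
    unfolding tendsto_fun_iff_pointwise tendsto_discrete eventually_sequentially
    using s(2) by blast
  then show "\<omega> \<in> closure S"
    unfolding closure_sequential using s(1) by blast
qed

definition natural_extension :: "'b set \<Rightarrow> (nat \<Rightarrow> 'b) set \<Rightarrow> (int \<Rightarrow> 'b) set" where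
  "natural_extension A X =
    {\<omega>. (\<forall>n. \<omega> n \<in> A) \<and> (\<forall>k::int. k \<ge> 1 \<longrightarrow> (\<lambda>n::nat. \<omega> (int n - k)) \<in> X)}"

lemma closed_natural_extension:
  fixes A :: "'b::topological_space set"
  assumes "closed A" and "closed X"
  shows "closed (natural_extension A X)"
proof -
  have "natural_extension A X =
      (\<Inter>n. (\<lambda>\<omega>. \<omega> n) -` A) \<inter> (\<Inter>k\<in>{1..}. (\<lambda>\<omega>. (\<lambda>n. \<omega> (int n - k))) -` X)"
    unfolding natural_extension_def by auto
  moreover have "continuous_on UNIV (\<lambda>\<omega>::int \<Rightarrow> 'b. \<omega> n)" for n
    by (rule continuous_on_product_coordinates)
  moreover have "continuous_on UNIV (\<lambda>\<omega>::int \<Rightarrow> 'b. (\<lambda>n::nat. \<omega> (int n - k)))" for k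
    by (intro continuous_on_coordinatewise_then_product continuous_on_product_coordinates)
  ultimately show ?thesis
    using assms by (auto intro!: closed_Int closed_INT closed_vimage)
qed

lemma closure_subset_natural_extension:
  fixes A :: "'b::topological_space set"
  assumes "closed A"
    and "\<And>y n. y \<in> Y \<Longrightarrow> y n \<in> A"
    and "\<And>y k. y \<in> Y \<Longrightarrow> (\<lambda>n. y (int n - k)) \<in> X"
  shows "closure Y \<subseteq> natural_extension A (closure X)"
proof (rule closure_minimal)
  show "Y \<subseteq> natural_extension A (closure X)"
    using assms(2,3) closure_subset unfolding natural_extension_def by blast
  show "closed (natural_extension A (closure X))"
    using assms(1) by (intro closed_natural_extension) auto
qed

lemma natural_extension_subset_closure:
  fixes Y :: "(int \<Rightarrow> 'b::{discrete_topology, first_countable_topology}) set"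
  assumes realize: "\<And>x k. x \<in> X \<Longrightarrow> k \<ge> 1 \<Longrightarrow> \<exists>y\<in>Y. \<forall>n. y (int n - k) = x n"
  shows "natural_extension A (closure X) \<subseteq> closure Y"
proof
  fix \<omega> assume \<omega>: "\<omega> \<in> natural_extension A (closure X)"
  show "\<omega> \<in> closure Y"
    unfolding mem_closure_fun_discrete_iff
  proof (intro allI impI)
    fix F :: "int set"
    assume F: "finite F"
    define k where "k = 1 + (\<Sum>i\<in>F. \<bar>i\<bar>)"
    have k: "k \<ge> 1" "\<And>i. i \<in> F \<Longrightarrow> 0 \<le> i + k"
      using F member_le_sum[of _ F abs] unfolding k_def by (force intro: sum_nonneg)+
    have "(\<lambda>n. \<omega> (int n - k)) \<in> closure X"
      using \<omega> k(1) unfolding natural_extension_def by blast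
    moreover have "finite ((\<lambda>i. nat (i + k)) ` F)"
      using F by simp
    ultimately obtain x where x: "x \<in> X" "\<forall>n \<in> (\<lambda>i. nat (i + k)) ` F. x n = \<omega> (int n - k)"
      unfolding mem_closure_fun_discrete_iff by blast
    obtain y where y: "y \<in> Y" "\<And>n. y (int n - k) = x n"
      using realize[OF x(1) k(1)] by blast
    have "y i = \<omega> i" if "i \<in> F" for i
      using y(2)[of "nat (i + k)"] x(2) k(2)[OF that] that by simp
    then show "\<exists>y\<in>Y. \<forall>i\<in>F. y i = \<omega> i"
      using y(1) by blast
  qed
qed

section \<open>Two-sided orbits\<close>

definition two_sided_orbit :: "('a \<Rightarrow> 'a) \<Rightarrow> ('a \<Rightarrow> 'a) \<Rightarrow> 'a \<Rightarrow> int \<Rightarrow> 'a" where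
  "two_sided_orbit f g w t = (if 0 \<le> t then (f ^^ nat t) w else (g ^^ nat (- t)) w)"

lemma two_sided_orbit_step:
  assumes inverse: "\<And>v. v \<in> A \<Longrightarrow> g v \<in> A \<and> f (g v) = v" and "w \<in> A"
  shows "f (two_sided_orbit f g w t) = two_sided_orbit f g w (t + 1)"
proof (cases "0 \<le> t")
  case True
  then show ?thesis
    by (simp add: two_sided_orbit_def nat_add_distrib)
next
  case False
  then obtain k where k: "nat (- t) = Suc k" "t + 1 = - int k"
    by (intro that[of "nat (- t - 1)"]) auto
  have "(g ^^ k) w \<in> A"
    using assms by (induction k) auto
  moreover have "two_sided_orbit f g w t = g ((g ^^ k) w)"
    using False k(1) by (simp add: two_sided_orbit_def)
  moreover have "two_sided_orbit f g w (t + 1) = (g ^^ k) w"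
    unfolding k(2) by (cases k) (simp_all add: two_sided_orbit_def nat_add_distrib)
  ultimately show ?thesis
    using inverse by simp
qed

lemma orbit_funpow:
  assumes "\<And>t. f (q t) = q (t + 1)"
  shows "(f ^^ n) (q s) = q (s + int n)"
  by (induction n) (simp_all add: assms ac_simps)

lemma orbit_unique_if_inj_on:
  fixes q1 q2 :: "int \<Rightarrow> 'a"
  assumes "inj_on f A"
    and orbit1: "\<And>t. f (q1 t) = q1 (t + 1)" "\<And>t. q1 t \<in> A"
    and orbit2: "\<And>t. f (q2 t) = q2 (t + 1)" "\<And>t. q2 t \<in> A"
    and start: "q1 0 = q2 0"
  shows "q1 = q2"
proof
  fix t :: int
  have future: "q1 (int n) = q2 (int n)" for n
    using orbit_funpow[of f q1 n 0] orbit_funpow[of f q2 n 0] orbit1(1) orbit2(1) start by simp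
  have past: "q1 (- int n) = q2 (- int n)" for n
  proof (induction n)
    case 0
    then show ?case using start by simp
  next
    case (Suc n)
    have "f (q1 (- int (Suc n))) = f (q2 (- int (Suc n)))"
      using orbit1(1)[of "- int (Suc n)"] orbit2(1)[of "- int (Suc n)"] Suc by simp
    then show ?case
      using inj_onD[OF assms(1)] orbit1(2) orbit2(2) by blast
  qed
  show "q1 t = q2 t"
    using future[of "nat t"] past[of "nat (- t)"] by (cases "0 \<le> t") simp_all
qed

section \<open>The cells and the maps f_a and f_{a,b}\<close>

lemma nat_eq_if_interval_overlap:
  fixes i j :: nat and t :: real
  assumes "real i - 1 < t" "t < real i" "real j - 1 \<le> t" "t \<le> real j"
  shows "i = j"
proof -
  have "real i < real (j + 1)" "real j < real (i + 1)"
    using assms by simp_all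
  then show ?thesis
    by linarith
qed

locale hc_parameters =
  fixes m :: nat and a b :: real
  assumes m_ge_2: "m \<ge> 2"
    and a_pos: "0 < a" and a_less: "a < 1 / real m"
    and b_pos: "0 < b" and b_less: "b < 1 / real m"
begin

lemma m_pos: "0 < real m"
  using m_ge_2 by simp

lemma ma_less_1: "real m * a < 1"
  using a_less m_ge_2 by (simp add: field_simps)

lemma mb_less_1: "real m * b < 1"
  using b_less m_ge_2 by (simp add: field_simps)

definition open_cell :: "nat \<Rightarrow> (real \<times> real) set" where
  "open_cell i =
    (if i \<le> m then {(real i - 1) * a <..< real i * a} \<times> {0 <..< 1}
     else {real m * a <..< 1} \<times> {(real i - real m - 1) / real m <..< (real i - real m) / real m})"

lemma interior_OmegaP:
  assumes "i \<in> {1..2*m}"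
  shows "interior (OmegaP m a i) = open_cell i"
proof -
  consider "i \<le> m" | "m + 1 \<le> i \<and> i \<le> 2*m - 1" | "i = 2*m"
    using assms by force
  then show ?thesis
  proof cases
    case 1
    then show ?thesis
      using assms by (simp add: OmegaP_def open_cell_def interior_Times)
  next
    case 2
    then show ?thesis
      using assms by (simp add: OmegaP_def open_cell_def interior_Times)
  next
    case 3
    have "(real i - real m - 1) / real m = (real m - 1) / real m" "(real i - real m) / real m = 1"
      using 3 m_pos by auto
    moreover have "\<not> i \<le> m" "\<not> i \<le> 2*m - 1"
      using 3 m_ge_2 by auto
    ultimately show ?thesis
      using 3 by (simp add: OmegaP_def open_cell_def interior_Times)
  qed
qed

lemma OmegaP_bounds:
  assumes "(x, y) \<in> OmegaP m a j" "j \<in> {1..2*m}"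
  shows "j \<le> m \<Longrightarrow> (real j - 1) * a \<le> x \<and> x < real j * a"
    and "m < j \<Longrightarrow> real m * a \<le> x \<and>
           (real j - real m - 1) / real m \<le> y \<and> y \<le> (real j - real m) / real m"
proof -
  show "j \<le> m \<Longrightarrow> (real j - 1) * a \<le> x \<and> x < real j * a"
    using assms by (simp add: OmegaP_def)
  assume "m < j"
  moreover have "j = 2*m \<Longrightarrow> (real j - real m - 1) / real m = (real m - 1) / real m \<and>
                              (real j - real m) / real m = 1"
    using m_pos by auto
  ultimately show "real m * a \<le> x \<and>
           (real j - real m - 1) / real m \<le> y \<and> y \<le> (real j - real m) / real m"
    using assms by (auto simp: OmegaP_def split: if_splits)
qed

lemma OmegaP_index_unique:
  assumes cell: "(x, y) \<in> open_cell i" and i: "i \<in> {1..2*m}"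
    and j: "j \<in> {1..2*m}" and mem: "(x, y) \<in> OmegaP m a j"
  shows "j = i"
proof (cases "i \<le> m"; cases "j \<le> m")
  assume "i \<le> m" "j \<le> m"
  then have "real i - 1 < x / a" "x / a < real i" "real j - 1 \<le> x / a" "x / a \<le> real j"
    using cell OmegaP_bounds(1)[OF mem j] a_pos by (auto simp: open_cell_def field_simps)
  then show "j = i"
    by (intro nat_eq_if_interval_overlap[symmetric])
next
  assume "\<not> i \<le> m" "\<not> j \<le> m"
  then have "real i - 1 < real m * y + real m" "real m * y + real m < real i"
    "real j - 1 \<le> real m * y + real m" "real m * y + real m \<le> real j"
    using cell OmegaP_bounds(2)[OF mem j] m_pos by (auto simp: open_cell_def field_simps)
  then show "j = i"
    by (intro nat_eq_if_interval_overlap[symmetric])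
next
  assume "i \<le> m" "\<not> j \<le> m"
  moreover have "real i * a \<le> real m * a"
    using \<open>i \<le> m\<close> a_pos by (simp add: mult_right_mono)
  ultimately show "j = i"
    using cell OmegaP_bounds(2)[OF mem j] by (simp add: open_cell_def)
next
  assume "\<not> i \<le> m" "j \<le> m"
  moreover have "real j * a \<le> real m * a"
    using \<open>j \<le> m\<close> a_pos by (simp add: mult_right_mono)
  ultimately show "j = i"
    using cell OmegaP_bounds(1)[OF mem j] by (simp add: open_cell_def)
qed

lemma open_cell_subset_OmegaP: "i \<in> {1..2*m} \<Longrightarrow> open_cell i \<subseteq> OmegaP m a i"
  by (metis interior_OmegaP interior_subset)

lemma idxP_open_cell:
  assumes "(x, y) \<in> open_cell i" "i \<in> {1..2*m}"
  shows "idxP m a (x, y) = i"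
  unfolding idxP_def
  using assms open_cell_subset_OmegaP OmegaP_index_unique[OF assms] by (intro some_equality) blast+

definition cell_index :: "real \<times> real \<Rightarrow> nat" where
  "cell_index u = (THE i. i \<in> {1..2*m} \<and> u \<in> interior (OmegaP m a i))"

lemma cell_index_open_cell:
  assumes "(x, y) \<in> open_cell i" "i \<in> {1..2*m}"
  shows "cell_index (x, y) = i"
  unfolding cell_index_def
proof (rule the_equality)
  show "i \<in> {1..2*m} \<and> (x, y) \<in> interior (OmegaP m a i)"
    using assms interior_OmegaP by simp
  fix j
  assume "j \<in> {1..2*m} \<and> (x, y) \<in> interior (OmegaP m a j)"
  then show "j = i"
    using OmegaP_index_unique[OF assms] interior_subset by blast
qed

lemma pia_eq_cell_index: "pia m a u n = cell_index ((fa m a ^^ n) u)"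
  by (simp add: pia_def cell_index_def)

lemma open_cell_unit_square:
  assumes "(x, y) \<in> open_cell i" "i \<in> {1..2*m}"
  shows "0 < x \<and> x < 1 \<and> 0 < y \<and> y < 1"
proof (cases "i \<le> m")
  case True
  have "0 \<le> (real i - 1) * a" "real i * a \<le> real m * a"
    using True assms(2) a_pos by (auto simp: mult_right_mono)
  then show ?thesis
    using True assms(1) ma_less_1 by (auto simp: open_cell_def)
next
  case False
  have "0 \<le> real m * a" "0 \<le> (real i - real m - 1) / real m" "(real i - real m) / real m \<le> 1"
    using False assms(2) m_pos a_pos by (auto simp: divide_simps)
  moreover have "real m * a < x" "x < 1" "(real i - real m - 1) / real m < y" "y < (real i - real m) / real m"
    using False assms(1) by (auto simp: open_cell_def)
  ultimately show ?thesis
    by linarith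
qed

lemma Fa_open_cell:
  assumes "(x, y) \<in> open_cell i" "i \<in> {1..2*m}"
  shows "Fa m a x = (if i \<le> m then (x - (real i - 1) * a) / a else (x - real m * a) / (1 - real m * a))"
proof (cases "i \<le> m")
  case True
  have x: "(real i - 1) * a < x" "x < real i * a"
    using assms(1) True by (auto simp: open_cell_def)
  have "real i * a \<le> real m * a"
    using True a_pos by (simp add: mult_right_mono)
  then have "x < real m * a"
    using x by linarith
  moreover have "\<lfloor>x / a\<rfloor> = int i - 1"
    using x a_pos by (intro floor_unique) (auto simp: field_simps)
  ultimately show ?thesis
    using True assms(2) by (simp add: Fa_def of_nat_diff)
next
  case False
  then show ?thesis
    using assms(1) by (simp add: Fa_def open_cell_def)
qed

lemma fab_eq:
  "fab m a b (x, y, z) = (fst (fa m a (x, y)), snd (fa m a (x, y)),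
     if idxP m a (x, y) \<le> m then (1 - real m * b) * z
     else b * z + 1 - real m * b + b * (real (idxP m a (x, y)) - real m - 1))"
  by (simp add: fab_def Let_def split_def)

lemma fab_open_cell:
  assumes "(x, y) \<in> open_cell i" "i \<in> {1..2*m}"
  shows "fab m a b (x, y, z) =
    (if i \<le> m then ((x - (real i - 1) * a) / a, y / real m + (real i - 1) / real m, (1 - real m * b) * z)
     else ((x - real m * a) / (1 - real m * a), real m * y - real i + real m + 1,
           b * z + 1 - real m * b + b * (real i - real m - 1)))"
  using assms by (simp add: fab_eq fa_def idxP_open_cell Fa_open_cell)

definition proj_xy :: "real \<times> real \<times> real \<Rightarrow> real \<times> real" where
  "proj_xy w = (fst w, fst (snd w))"

lemma proj_xy_fab: "proj_xy (fab m a b w) = fa m a (proj_xy w)"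
  by (cases w) (simp add: proj_xy_def fab_eq)

lemma proj_xy_funpow_fab: "proj_xy ((fab m a b ^^ n) w) = (fa m a ^^ n) (proj_xy w)"
  by (induction n) (simp_all add: proj_xy_fab)

abbreviation interiors_plus :: "(real \<times> real) set" where
  "interiors_plus \<equiv> \<Union>i\<in>{1..2*m}. interior (OmegaP m a i)"

abbreviation interiors :: "(real \<times> real \<times> real) set" where
  "interiors \<equiv> \<Union>i\<in>{1..2*m}. interior (OmegaF m a i)"

lemma interior_OmegaF:
  assumes "i \<in> {1..2*m}"
  shows "interior (OmegaF m a i) = {(x, y, z). (x, y) \<in> open_cell i \<and> 0 < z \<and> z < 1}"
  unfolding OmegaF_def interior_reassoc_Times using assms by (simp add: interior_OmegaP)

lemma interiors_plus_eq: "interiors_plus = (\<Union>i\<in>{1..2*m}. open_cell i)"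
  by (rule SUP_cong[OF refl interior_OmegaP])

lemma interiors_eq:
  "interiors = {w. proj_xy w \<in> interiors_plus \<and> 0 < snd (snd w) \<and> snd (snd w) < 1}"
proof -
  have "interiors = (\<Union>i\<in>{1..2*m}. {(x, y, z). (x, y) \<in> open_cell i \<and> 0 < z \<and> z < 1})"
    by (rule SUP_cong[OF refl interior_OmegaF])
  then show ?thesis
    unfolding interiors_plus_eq proj_xy_def by auto
qed

lemma interiorsE:
  assumes "w \<in> interiors"
  obtains x y z i where "w = (x, y, z)" "(x, y) \<in> open_cell i" "i \<in> {1..2*m}" "0 < z" "z < 1"
  using assms unfolding interiors_eq interiors_plus_eq by (cases w) (auto simp: proj_xy_def)

lemma cell_index_mem: "u \<in> interiors_plus \<Longrightarrow> cell_index u \<in> {1..2*m}"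
  unfolding interiors_plus_eq by (cases u) (auto simp: cell_index_open_cell)

lemma Xa_funpow_mem: "u \<in> Xa m a \<Longrightarrow> (fa m a ^^ n) u \<in> interiors_plus"
  unfolding Xa_def by blast

lemma OmegaF_index_eq_cell_index:
  assumes "w \<in> interiors"
  shows "(THE i. i \<in> {1..2*m} \<and> w \<in> interior (OmegaF m a i)) = cell_index (proj_xy w)"
proof -
  obtain x y z i where w: "w = (x, y, z)" and i: "(x, y) \<in> open_cell i" "i \<in> {1..2*m}"
    and z: "0 < z" "z < 1"
    using assms by (rule interiorsE)
  have "(THE i. i \<in> {1..2*m} \<and> w \<in> interior (OmegaF m a i)) = i"
  proof (rule the_equality)
    show "i \<in> {1..2*m} \<and> w \<in> interior (OmegaF m a i)"
      using i z w interior_OmegaF by simp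
    fix j
    assume "j \<in> {1..2*m} \<and> w \<in> interior (OmegaF m a j)"
    then have "j \<in> {1..2*m}" "(x, y) \<in> open_cell j"
      using w interior_OmegaF by auto
    then show "j = i"
      using OmegaP_index_unique[OF i] open_cell_subset_OmegaP by blast
  qed
  then show ?thesis
    using i w by (simp add: proj_xy_def cell_index_open_cell)
qed

lemma fab_z_in_unit_interval:
  assumes "w \<in> interiors"
  shows "0 < snd (snd (fab m a b w)) \<and> snd (snd (fab m a b w)) < 1"
proof -
  obtain x y z i where w: "w = (x, y, z)" and i: "(x, y) \<in> open_cell i" "i \<in> {1..2*m}"
    and z: "0 < z" "z < 1"
    using assms by (rule interiorsE)
  have mb: "0 < 1 - real m * b"
    using mb_less_1 by simp
  show ?thesis
  proof (cases "i \<le> m")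
    case True
    have "(1 - real m * b) * z < 1 - real m * b" "0 < (1 - real m * b) * z" "0 < real m * b"
      using mb z m_pos b_pos by simp_all
    then show ?thesis
      using True by (simp add: w fab_open_cell[OF i])
  next
    case False
    have "snd (snd (fab m a b w)) = b * z + 1 - real m * b + b * (real i - real m - 1)"
      using False by (simp add: w fab_open_cell[OF i])
    moreover have "0 \<le> b * (real i - real m - 1)" "b * (real i - real m - 1) \<le> b * (real m - 1)"
      using False i(2) b_pos by (auto intro: mult_left_mono)
    moreover have "b * z < b" "0 < b * z" "b + 1 - real m * b + b * (real m - 1) = 1"
      using b_pos z by (simp_all add: algebra_simps)
    ultimately show ?thesis
      using mb by linarith
  qed
qed

lemma fab_cell_index_eq:
  assumes cell1: "(x1, y1) \<in> open_cell i" "i \<in> {1..2*m}" and z1: "0 < z1" "z1 < 1"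
    and cell2: "(x2, y2) \<in> open_cell j" "j \<in> {1..2*m}" and z2: "0 < z2" "z2 < 1"
    and eq: "fab m a b (x1, y1, z1) = fab m a b (x2, y2, z2)"
  shows "i = j"
proof -
  have y1: "0 < y1" "y1 < 1" and y2: "0 < y2" "y2 < 1"
    using open_cell_unit_square[OF cell1] open_cell_unit_square[OF cell2] by auto
  note eq = eq[unfolded fab_open_cell[OF cell1] fab_open_cell[OF cell2]]
  have mb: "0 < 1 - real m * b"
    using mb_less_1 by simp
  show ?thesis
  proof (cases "i \<le> m"; cases "j \<le> m")
    assume "i \<le> m" "j \<le> m"
    then have "y1 / real m + (real i - 1) / real m = y2 / real m + (real j - 1) / real m"
      using eq by simp
    then have "y1 + real i - 1 = y2 + real j - 1"
      using m_pos by (simp add: field_simps)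
    then show "i = j"
      using y1 y2 by (intro nat_eq_if_interval_overlap[of i "y1 + real i - 1"]) auto
  next
    assume "\<not> i \<le> m" "\<not> j \<le> m"
    then have "b * z1 + 1 - real m * b + b * (real i - real m - 1) =
               b * z2 + 1 - real m * b + b * (real j - real m - 1)"
      using eq by simp
    then have "b * (z1 + real i) = b * (z2 + real j)"
      by (simp add: algebra_simps)
    then have "z1 + real i - 1 = z2 + real j - 1"
      using b_pos by simp
    then show "i = j"
      using z1 z2 by (intro nat_eq_if_interval_overlap[of i "z1 + real i - 1"]) auto
  next
    assume "i \<le> m" "\<not> j \<le> m"
    then have "(1 - real m * b) * z1 = b * z2 + 1 - real m * b + b * (real j - real m - 1)"
      using eq by simp
    moreover have "(1 - real m * b) * z1 < 1 - real m * b" "0 < b * z2" "0 \<le> b * (real j - real m - 1)"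
      using mb z1 z2 b_pos \<open>\<not> j \<le> m\<close> by auto
    ultimately show "i = j"
      by linarith
  next
    assume "\<not> i \<le> m" "j \<le> m"
    then have "b * z1 + 1 - real m * b + b * (real i - real m - 1) = (1 - real m * b) * z2"
      using eq by simp
    moreover have "(1 - real m * b) * z2 < 1 - real m * b" "0 < b * z1" "0 \<le> b * (real i - real m - 1)"
      using mb z1 z2 b_pos \<open>\<not> i \<le> m\<close> by auto
    ultimately show "i = j"
      by linarith
  qed
qed

lemma fab_inj_on_open_cell:
  assumes "(x1, y1) \<in> open_cell i" "(x2, y2) \<in> open_cell i" "i \<in> {1..2*m}"
    and "fab m a b (x1, y1, z1) = fab m a b (x2, y2, z2)"
  shows "(x1, y1, z1) = (x2, y2, z2)"
proof -
  have "a \<noteq> 0" "1 - real m * a \<noteq> 0" "1 - real m * b \<noteq> 0" "b \<noteq> 0" "real m \<noteq> 0"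
    using a_pos ma_less_1 mb_less_1 b_pos m_pos by auto
  then show ?thesis
    using assms(4) unfolding fab_open_cell[OF assms(1,3)] fab_open_cell[OF assms(2,3)]
    by (cases "i \<le> m") (auto simp: divide_cancel_right)
qed

lemma inj_on_fab_interiors: "inj_on (fab m a b) interiors"
proof (rule inj_onI)
  fix w1 w2
  assume w1: "w1 \<in> interiors" and w2: "w2 \<in> interiors" and eq: "fab m a b w1 = fab m a b w2"
  obtain x1 y1 z1 i where w1_eq: "w1 = (x1, y1, z1)" and cell1: "(x1, y1) \<in> open_cell i" "i \<in> {1..2*m}"
    and z1: "0 < z1" "z1 < 1"
    using w1 by (rule interiorsE)
  obtain x2 y2 z2 j where w2_eq: "w2 = (x2, y2, z2)" and cell2: "(x2, y2) \<in> open_cell j" "j \<in> {1..2*m}"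
    and z2: "0 < z2" "z2 < 1"
    using w2 by (rule interiorsE)
  have "i = j"
    using fab_cell_index_eq[OF cell1 z1 cell2 z2] eq w1_eq w2_eq by simp
  then show "w1 = w2"
    using fab_inj_on_open_cell[OF cell1(1) _ cell1(2)] cell2(1) eq w1_eq w2_eq by simp
qed

section \<open>Itineraries\<close>

lemma good_orbit_unique:
  assumes "good_orbit m a b q1" "good_orbit m a b q2" "q1 0 = q2 0"
  shows "q1 = q2"
  using assms unfolding good_orbit_def
  by (intro orbit_unique_if_inj_on[OF inj_on_fab_interiors, of q1 q2]) auto

lemma piab_good_orbit:
  assumes "good_orbit m a b q"
  shows "piab m a b (q 0) t = cell_index (proj_xy (q t))"
proof -
  have orbit: "(SOME q'. q' 0 = q 0 \<and> good_orbit m a b q') = q"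
    using assms good_orbit_unique by (intro some_equality) auto
  have "q t \<in> interiors"
    using assms unfolding good_orbit_def by blast
  then show ?thesis
    unfolding piab_def Let_def orbit by (simp only: OmegaF_index_eq_cell_index)
qed

lemma piab_mem_alphabet:
  assumes "p \<in> Xab m a b"
  shows "piab m a b p t \<in> {1..2*m}"
proof -
  obtain q where q: "q 0 = p" "good_orbit m a b q"
    using assms unfolding Xab_def by blast
  then have "proj_xy (q t) \<in> interiors_plus"
    unfolding good_orbit_def interiors_eq by blast
  then show ?thesis
    using piab_good_orbit[OF q(2)] q(1) cell_index_mem by metis
qed

lemma piab_ray_mem_pia_image:
  assumes "p \<in> Xab m a b"
  shows "(\<lambda>n. piab m a b p (int n - k)) \<in> pia m a ` Xa m a"
proof -
  obtain q where q: "q 0 = p" "good_orbit m a b q"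
    using assms unfolding Xab_def by blast
  then have step: "\<And>t. fab m a b (q t) = q (t + 1)" and inside: "\<And>t. q t \<in> interiors"
    unfolding good_orbit_def by blast+
  define u where "u = proj_xy (q (- k))"
  have iterate: "(fa m a ^^ n) u = proj_xy (q (int n - k))" for n
    unfolding u_def proj_xy_funpow_fab[symmetric] orbit_funpow[of _ q, OF step] by simp
  have "u \<in> Xa m a"
    unfolding Xa_def using iterate inside interiors_eq by auto
  moreover have "piab m a b p (int n - k) = pia m a u n" for n
    using piab_good_orbit[OF q(2)] q(1) iterate by (simp add: pia_eq_cell_index)
  ultimately show ?thesis
    by auto
qed

section \<open>Lifting orbits of f_a to full orbits of f_{a,b}\<close>

lemma b_less_mb: "b < real m * b"
  using m_ge_2 b_pos by (simp add: mult_strict_right_mono)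

definition z_fix :: real where
  "z_fix = (1 - real m * b) / (1 - b)"

lemma z_fix_in_unit_interval: "0 < z_fix \<and> z_fix < 1"
  using b_less_mb mb_less_1 unfolding z_fix_def by (simp add: field_simps)

lemma z_fix_fixed: "b * z_fix + 1 - real m * b = z_fix"
proof -
  have "b < 1"
    using b_less_mb mb_less_1 by linarith
  then show ?thesis
    unfolding z_fix_def by (simp add: field_simps)
qed

definition z_fix_square :: "(real \<times> real \<times> real) set" where
  "z_fix_square = {(x, y, z). 0 < x \<and> x < 1 \<and> 0 < y \<and> y < 1 \<and> z = z_fix}"

definition inverse_branch :: "real \<times> real \<times> real \<Rightarrow> real \<times> real \<times> real" where
  "inverse_branch w = (real m * a + (1 - real m * a) * fst w, fst (snd w) / real m, snd (snd w))"

lemma inverse_branch_open_cell: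
  assumes "w \<in> z_fix_square"
  shows "proj_xy (inverse_branch w) \<in> open_cell (m + 1)"
proof -
  obtain x y where w: "w = (x, y, z_fix)" "0 < x" "x < 1" "0 < y" "y < 1"
    using assms unfolding z_fix_square_def by auto
  have "0 < (1 - real m * a) * x" "(1 - real m * a) * x < 1 - real m * a"
    using ma_less_1 w by simp_all
  moreover have "0 < y / real m" "y / real m < 1 / real m"
    using w m_pos by (simp_all add: divide_strict_right_mono)
  ultimately show ?thesis
    using w(1) by (simp add: inverse_branch_def proj_xy_def open_cell_def)
qed

lemma inverse_branch_mem_interiors: "w \<in> z_fix_square \<Longrightarrow> inverse_branch w \<in> interiors"
  using inverse_branch_open_cell[of w] z_fix_in_unit_interval m_ge_2
  unfolding interiors_eq interiors_plus_eq
  by (auto simp: z_fix_square_def inverse_branch_def intro!: bexI[of _ "m + 1"])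

lemma inverse_branch_right_inverse:
  assumes "w \<in> z_fix_square"
  shows "inverse_branch w \<in> z_fix_square \<and> fab m a b (inverse_branch w) = w"
proof -
  obtain x y where w: "w = (x, y, z_fix)" "0 < x" "x < 1" "0 < y" "y < 1"
    using assms unfolding z_fix_square_def by auto
  have cell: "(real m * a + (1 - real m * a) * x, y / real m) \<in> open_cell (m + 1)"
    using inverse_branch_open_cell[OF assms] w(1) by (simp add: inverse_branch_def proj_xy_def)
  have "m + 1 \<in> {1..2*m}" "1 - real m * a \<noteq> 0"
    using m_ge_2 ma_less_1 by auto
  then have "fab m a b (inverse_branch w) =
      ((real m * a + (1 - real m * a) * x - real m * a) / (1 - real m * a),
       real m * (y / real m) - real (m + 1) + real m + 1,
       b * z_fix + 1 - real m * b + b * (real (m + 1) - real m - 1))"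
    using w(1) by (simp add: inverse_branch_def fab_open_cell[OF cell])
  also have "\<dots> = w"
    using w(1) m_pos \<open>1 - real m * a \<noteq> 0\<close> z_fix_fixed by simp
  finally have "fab m a b (inverse_branch w) = w" .
  moreover have "inverse_branch w \<in> z_fix_square"
    using open_cell_unit_square[OF cell] m_ge_2 w(1)
    by (simp add: z_fix_square_def inverse_branch_def)
  ultimately show ?thesis
    by blast
qed

definition lifted_orbit :: "real \<times> real \<Rightarrow> int \<Rightarrow> real \<times> real \<times> real" where
  "lifted_orbit u = two_sided_orbit (fab m a b) inverse_branch (fst u, snd u, z_fix)"

lemma forward_lift_mem_interiors:
  assumes "u \<in> Xa m a"
  shows "(fab m a b ^^ n) (fst u, snd u, z_fix) \<in> interiors"
proof (induction n)
  case 0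
  have "u \<in> interiors_plus"
    using Xa_funpow_mem[OF assms, of 0] by simp
  then show ?case
    using z_fix_in_unit_interval unfolding interiors_eq by (simp add: proj_xy_def)
next
  case (Suc n)
  have "proj_xy ((fab m a b ^^ Suc n) (fst u, snd u, z_fix)) = (fa m a ^^ Suc n) u"
    unfolding proj_xy_funpow_fab by (simp add: proj_xy_def)
  moreover have "(fa m a ^^ Suc n) u \<in> interiors_plus"
    using assms by (rule Xa_funpow_mem)
  ultimately show ?case
    using fab_z_in_unit_interval[OF Suc] unfolding interiors_eq by simp
qed

lemma good_orbit_lifted_orbit:
  assumes "u \<in> Xa m a"
  shows "good_orbit m a b (lifted_orbit u)"
proof -
  have "u \<in> interiors_plus"
    using Xa_funpow_mem[OF assms, of 0] by simp
  then have start: "(fst u, snd u, z_fix) \<in> z_fix_square"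
    unfolding interiors_plus_eq z_fix_square_def using open_cell_unit_square by (cases u) auto
  have "fab m a b (lifted_orbit u t) = lifted_orbit u (t + 1)" for t
    unfolding lifted_orbit_def using inverse_branch_right_inverse start by (rule two_sided_orbit_step)
  moreover have "lifted_orbit u t \<in> interiors" for t
  proof (cases "0 \<le> t")
    case True
    then show ?thesis
      using forward_lift_mem_interiors[OF assms] by (simp add: lifted_orbit_def two_sided_orbit_def)
  next
    case False
    then obtain k where k: "nat (- t) = Suc k"
      by (intro that[of "nat (- t - 1)"]) auto
    have "(inverse_branch ^^ k) (fst u, snd u, z_fix) \<in> z_fix_square"
      using start inverse_branch_right_inverse by (induction k) auto
    then show ?thesis
      using False k inverse_branch_mem_interiors by (simp add: lifted_orbit_def two_sided_orbit_def)
  qed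
  ultimately show ?thesis
    unfolding good_orbit_def by blast
qed

lemma pia_lifts_to_piab:
  assumes "u \<in> Xa m a"
  shows "\<exists>p\<in>Xab m a b. \<forall>n. piab m a b p (int n - k) = pia m a u n"
proof -
  define q where "q t = lifted_orbit u (t + k)" for t
  have q: "good_orbit m a b q"
    using good_orbit_lifted_orbit[OF assms] unfolding good_orbit_def q_def by (simp add: ac_simps)
  then have "q 0 \<in> Xab m a b"
    unfolding Xab_def by blast
  moreover have "piab m a b (q 0) (int n - k) = pia m a u n" for n
  proof -
    have "q (int n - k) = (fab m a b ^^ n) (fst u, snd u, z_fix)"
      by (simp add: q_def lifted_orbit_def two_sided_orbit_def)
    then have "proj_xy (q (int n - k)) = (fa m a ^^ n) (proj_xy (fst u, snd u, z_fix))"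
      by (simp only: proj_xy_funpow_fab)
    then show ?thesis
      unfolding piab_good_orbit[OF q] pia_eq_cell_index by (simp add: proj_xy_def)
  qed
  ultimately show ?thesis
    by blast
qed

end

theorem proposition2p2:
  fixes m :: nat and a b :: real
  assumes "m \<ge> 2" and "0 < a" and "a < 1 / real m" and "0 < b" and "b < 1 / real m"
  shows "SigmaHC m a b =
    {\<omega> :: int \<Rightarrow> nat. (\<forall>n. \<omega> n \<in> {1..2*m}) \<and>
       (\<forall>k::int. k \<ge> 1 \<longrightarrow> (\<lambda>n::nat. \<omega> (int n - k)) \<in> SigmaHCplus m a)}"
proof -
  interpret hc_parameters m a b
    using assms by unfold_locales
  have "closure (piab m a b ` Xab m a b) = natural_extension {1..2*m} (closure (pia m a ` Xa m a))"
  proof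
    show "closure (piab m a b ` Xab m a b) \<subseteq> natural_extension {1..2*m} (closure (pia m a ` Xa m a))"
      by (rule closure_subset_natural_extension)
         (use piab_mem_alphabet piab_ray_mem_pia_image in \<open>auto simp: closed_def open_discrete\<close>)
    show "natural_extension {1..2*m} (closure (pia m a ` Xa m a)) \<subseteq> closure (piab m a b ` Xab m a b)"
      by (rule natural_extension_subset_closure) (auto dest: pia_lifts_to_piab[of _ k for k])
  qed
  then show ?thesis
    unfolding SigmaHC_def SigmaHCplus_def natural_extension_def .
qed

end
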